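(* Let $\Omega$ be an algebraically closed field and let $C$ be a non-empty finite set of elements of $\Omega^\times$. Then there exist only finitely many inequivalent decompositions of the form $C=A_1\cdots A_k$ with each $\#A_i>1$.
   Context: For finite multisets $A,B$ of elements of $\Omega^\times$, $AB=\{ab:a\in A,b\in B\}$ denotes the multiset of pairwise products (and $A_1\cdots A_k$ is defined iteratively); for a single element $a$, $aB=\{a\}B$. Write $A\sim B$ if there is $\xi\in\Omega^\times$ with $\xi A=B$. Two decompositions $C=A_1\cdots A_k$ and $C=B_1\cdots B_l$ (equalities of multisets, the $A_i,B_j$ being finite multisets in $\Omega^\times$) are equivalent if $k=l$ and, after reordering, $A_i\sim B_i$ for every $i$. *)

theory Defs
  imports "HOL-Computational_Algebra.Polynomial" "HOL-Library.Multiset"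
begin

definition mset_times :: "'a::field multiset \<Rightarrow> 'a multiset \<Rightarrow> 'a multiset" where
  "mset_times A B = (\<Sum>a\<in>#A. image_mset (\<lambda>b. a * b) B)"

fun mset_prod_list :: "'a::field multiset list \<Rightarrow> 'a multiset" where
  "mset_prod_list [] = {#1#}"
| "mset_prod_list [A] = A"
| "mset_prod_list (A # As) = mset_times A (mset_prod_list As)"

definition mset_sim :: "'a::field multiset \<Rightarrow> 'a multiset \<Rightarrow> bool" where
  "mset_sim A B \<longleftrightarrow> (\<exists>\<xi>. \<xi> \<noteq> 0 \<and> image_mset (\<lambda>a. \<xi> * a) A = B)"

definition is_decomp :: "'a::field set \<Rightarrow> 'a multiset list \<Rightarrow> bool" where
  "is_decomp C As \<longleftrightarrow> As \<noteq> [] \<and> (\<forall>A\<in>set As. 0 \<notin># A \<and> size A > 1)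
      \<and> mset_prod_list As = mset_set C"

definition decomp_equiv :: "'a::field multiset list \<Rightarrow> 'a multiset list \<Rightarrow> bool" where
  "decomp_equiv As Bs \<longleftrightarrow> length As = length Bs \<and>
     (\<exists>\<sigma>::nat\<Rightarrow>nat. bij_betw \<sigma> {..<length As} {..<length As} \<and> (\<forall>i<length As. mset_sim (As ! i) (Bs ! \<sigma> i)))"

end

theory Submission
  imports Defs
begin

(* Dividing every factor of C = A_1 ... A_k by one of its own elements gives an equivalent
   decomposition C' = A_1' ... A_k' in which every factor contains 1. Then 1 lies in
   C' = x^-1 C for some x in C, and each A_i' lies inside C' (multiply it by the 1s of the other
   factors). So the normalised factors are submultisets of one of the finitely many multisets
   x^-1 C, and since 2^k <= #C there are fewer than #C of them. *)

lemma finite_submultisets: "finite {B. B \<subseteq># X}"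
proof (rule finite_subset)
  show "{B. B \<subseteq># X} \<subseteq> mset ` {xs. set xs \<subseteq> set_mset X \<and> length xs \<le> size X}"
  proof
    fix B assume "B \<in> {B. B \<subseteq># X}"
    then have "B \<subseteq># X" by simp
    obtain xs where xs: "mset xs = B" using ex_mset by blast
    have "set xs \<subseteq> set_mset X"
      using set_mset_mono[OF \<open>B \<subseteq># X\<close>] by (simp flip: xs)
    moreover have "length xs \<le> size X"
      using size_mset_mono[OF \<open>B \<subseteq># X\<close>] by (simp flip: xs)
    ultimately show "B \<in> mset ` {xs. set xs \<subseteq> set_mset X \<and> length xs \<le> size X}"
      using xs by blast
  qed
  show "finite (mset ` {xs. set xs \<subseteq> set_mset X \<and> length xs \<le> size X})"
    by (simp add: finite_lists_length_le)
qed

lemma mset_times_empty [simp]: "mset_times {#} B = {#}"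
  by (simp add: mset_times_def)

lemma mset_times_add_mset [simp]:
  "mset_times (add_mset a A) B = image_mset ((*) a) B + mset_times A B"
  by (simp add: mset_times_def)

lemma size_mset_times [simp]: "size (mset_times A B) = size A * size B"
  by (induction A) auto

lemma mset_times_image_mset_mult:
  "mset_times (image_mset ((*) x) A) (image_mset ((*) y) B) = image_mset ((*) (x * y)) (mset_times A B)"
  by (induction A) (auto simp: multiset.map_comp o_def mult_ac)

lemma mset_times_subset_left: "1 \<in># B \<Longrightarrow> A \<subseteq># mset_times A B"
proof (induction A)
  case (add a A)
  have "{#a#} \<subseteq># image_mset ((*) a) B"
    using add.prems by (metis image_eqI mult_1_right set_image_mset single_subset_iff)
  then have "{#a#} + A \<subseteq># image_mset ((*) a) B + mset_times A B"
    using add.IH[OF add.prems] by (rule subset_mset.add_mono)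
  then show ?case by simp
qed simp

lemma mset_times_subset_right: "1 \<in># A \<Longrightarrow> B \<subseteq># mset_times A B"
proof -
  assume "1 \<in># A"
  then obtain A' where "A = add_mset 1 A'" by (metis mset_add)
  then show ?thesis by (simp add: multiset.map_ident_strong)
qed

lemma mset_prod_list_map_mult:
  "As \<noteq> [] \<Longrightarrow> mset_prod_list (map (\<lambda>A. image_mset ((*) (f A)) A) As)
     = image_mset ((*) (prod_list (map f As))) (mset_prod_list As)"
  by (induction As rule: mset_prod_list.induct) (simp_all add: mset_times_image_mset_mult)

lemma one_in_mset_prod_list: "(\<And>B. B \<in> set Bs \<Longrightarrow> 1 \<in># B) \<Longrightarrow> 1 \<in># mset_prod_list Bs"
  by (induction Bs rule: mset_prod_list.induct)
    (auto dest: mset_times_subset_left mset_subset_eqD)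

lemma mset_prod_list_factor_subset:
  "(\<And>B. B \<in> set Bs \<Longrightarrow> 1 \<in># B) \<Longrightarrow> A \<in> set Bs \<Longrightarrow> A \<subseteq># mset_prod_list Bs"
proof (induction Bs rule: mset_prod_list.induct)
  case (3 B B' Bs)
  have "1 \<in># mset_prod_list (B' # Bs)"
    using "3.prems"(1) by (intro one_in_mset_prod_list) simp
  show ?case
  proof (cases "A = B")
    case True
    then show ?thesis
      using mset_times_subset_left[OF \<open>1 \<in># mset_prod_list (B' # Bs)\<close>] by simp
  next
    case False
    then have "A \<subseteq># mset_prod_list (B' # Bs)"
      using 3 by simp
    also have "\<dots> \<subseteq># mset_times B (mset_prod_list (B' # Bs))"
      using "3.prems"(1) by (intro mset_times_subset_right) simp
    finally show ?thesis by simp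
  qed
qed simp_all

lemma size_mset_prod_list_ge:
  "(\<And>A. A \<in> set As \<Longrightarrow> size A > 1) \<Longrightarrow> 2 ^ length As \<le> size (mset_prod_list As)"
proof (induction As rule: mset_prod_list.induct)
  case (3 A B As)
  have "2 \<le> size A"
    using "3.prems"[of A] by simp
  with 3 have "2 * 2 ^ length (B # As) \<le> size A * size (mset_prod_list (B # As))"
    by (intro mult_le_mono) auto
  then show ?case by simp
qed simp_all

definition mset_normalize :: "'a::field multiset \<Rightarrow> 'a multiset" where
  "mset_normalize A = image_mset ((*) (inverse (SOME a. a \<in># A))) A"

lemma
  assumes "A \<noteq> {#}" and "0 \<notin># A"
  shows one_in_mset_normalize: "1 \<in># mset_normalize A"
    and mset_sim_mset_normalize: "mset_sim A (mset_normalize A)"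
proof -
  define a where "a = (SOME a. a \<in># A)"
  have "a \<in># A" using assms(1) unfolding a_def by (meson multiset_nonemptyE someI)
  with assms(2) have "a \<noteq> 0" by auto
  show "1 \<in># mset_normalize A"
    using \<open>a \<in># A\<close> \<open>a \<noteq> 0\<close> unfolding mset_normalize_def a_def[symmetric]
    by (metis image_eqI left_inverse set_image_mset)
  show "mset_sim A (mset_normalize A)"
    using \<open>a \<noteq> 0\<close> unfolding mset_sim_def mset_normalize_def a_def[symmetric]
    by (intro exI[of _ "inverse a"]) simp
qed

lemma decomp_equiv_map:
  "(\<And>A. A \<in> set As \<Longrightarrow> mset_sim A (f A)) \<Longrightarrow> decomp_equiv As (map f As)"
  unfolding decomp_equiv_def by (intro conjI exI[of _ id]) auto

lemma is_decomp_factorD: "is_decomp C As \<Longrightarrow> A \<in> set As \<Longrightarrow> A \<noteq> {#} \<and> 0 \<notin># A"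
  unfolding is_decomp_def by (auto simp flip: size_eq_0_iff_empty)

lemma decomp_normalized_factors_subset:
  assumes "is_decomp C As"
  obtains x where "x \<in> C"
    and "\<And>B. B \<in> set (map mset_normalize As) \<Longrightarrow> B \<subseteq># image_mset ((*) (inverse x)) (mset_set C)"
proof -
  define e where "e = (\<Prod>A\<leftarrow>As. inverse (SOME a. a \<in># A))"
  have "As \<noteq> []"
    using assms unfolding is_decomp_def by simp
  have ones: "\<And>B. B \<in> set (map mset_normalize As) \<Longrightarrow> 1 \<in># B"
    using is_decomp_factorD[OF assms] one_in_mset_normalize by auto
  have product: "mset_prod_list (map mset_normalize As) = image_mset ((*) e) (mset_set C)"
    using mset_prod_list_map_mult[OF \<open>As \<noteq> []\<close>] assms
    unfolding mset_normalize_def e_def is_decomp_def by simp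
  have "1 \<in># mset_prod_list (map mset_normalize As)"
    using ones by (rule one_in_mset_prod_list)
  then obtain x where "x \<in># mset_set C" "e * x = 1"
    unfolding product by auto
  have "x \<in> C"
    using \<open>x \<in># mset_set C\<close> by (cases "finite C") auto
  have "e = inverse x"
    using inverse_unique[of x e] \<open>e * x = 1\<close> by (simp add: mult.commute)
  show thesis
  proof (rule that[OF \<open>x \<in> C\<close>])
    fix B assume "B \<in> set (map mset_normalize As)"
    from mset_prod_list_factor_subset[OF ones this]
    show "B \<subseteq># image_mset ((*) (inverse x)) (mset_set C)"
      unfolding product \<open>e = inverse x\<close> .
  qed
qed

lemma length_decomp_less_card: "is_decomp C As \<Longrightarrow> length As < card C"
proof -
  assume "is_decomp C As"
  then have "2 ^ length As \<le> card C"
    using size_mset_prod_list_ge[of As] unfolding is_decomp_def by force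
  then show ?thesis by (meson less_exp order_less_le_trans)
qed

theorem lemma4p3:
  fixes C :: "'a::alg_closed_field set"
  assumes "finite C" and "C \<noteq> {}" and "0 \<notin> C"
  shows "\<exists>F. finite F \<and> (\<forall>As. is_decomp C As \<longrightarrow> (\<exists>Bs\<in>F. decomp_equiv As Bs))"
proof (intro exI conjI allI impI)
  define M where "M = (\<Union>x\<in>C. {B. B \<subseteq># image_mset ((*) (inverse x)) (mset_set C)})"
  have "finite M"
    unfolding M_def using \<open>finite C\<close> finite_submultisets by blast
  then show "finite {Bs. set Bs \<subseteq> M \<and> length Bs \<le> card C}"
    by (rule finite_lists_length_le)
  fix As assume decomp: "is_decomp C As"
  then have "set (map mset_normalize As) \<subseteq> M"
    unfolding M_def by (elim decomp_normalized_factors_subset) blast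
  moreover have "length (map mset_normalize As) \<le> card C"
    using length_decomp_less_card[OF decomp] by simp
  moreover have "decomp_equiv As (map mset_normalize As)"
    using is_decomp_factorD[OF decomp] by (intro decomp_equiv_map mset_sim_mset_normalize) auto
  ultimately show "\<exists>Bs\<in>{Bs. set Bs \<subseteq> M \<and> length Bs \<le> card C}. decomp_equiv As Bs"
    by blast
qed

end
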